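(* Let $0 < b < a \leq 1$. Then \[ (a-b)\left(\frac{1}{ab} + \frac{1}{b+1}\right) < \psi(a) - \psi(b) < (a-b)\left(\frac1{ab} + \frac{\pi^2}6\right). \] Further, if in addition $a, b > \frac12$, then \[ \psi(a) - \psi(b) < (a - b)\left(\frac1{ab} + \frac{\pi^2}{6} - \frac59\right). \]
   Context: $\psi=\Gamma'/\Gamma$ is the digamma function. *)

theory Defs
  imports "HOL-Analysis.Analysis"
begin

end

theory Submission
  imports Defs
begin

text \<open>From the series of \<open>\<psi>\<close> one gets
  \<open>\<psi>(a) - \<psi>(b) = (a - b) \<Sum>\<^sub>k 1 / ((a + k) (b + k))\<close>, summed over \<open>k \<ge> 0\<close>. The term \<open>k = 0\<close> is \<open>1 / (ab)\<close>;
  each remaining term lies strictly between the telescoping \<open>1 / ((b + k) (b + k + 1))\<close>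
  (since \<open>a < b + 1\<close>) and \<open>1 / k\<^sup>2\<close>, whose sums are \<open>1 / (b + 1)\<close> and \<open>\<pi>\<^sup>2 / 6\<close>.
  For \<open>a, b > 1/2\<close> the term \<open>k = 1\<close> is even below \<open>4/9 = 1 - 5/9\<close>.\<close>

lemma sums_strict_less:
  fixes f g :: "nat \<Rightarrow> real"
  assumes "f sums x" "g sums y" "\<And>n. f n < g n"
  shows "x < y"
proof -
  have diff: "(\<lambda>n. g n - f n) sums (y - x)"
    using sums_diff[OF assms(2,1)] .
  have "0 < (\<Sum>n. g n - f n)"
    using diff assms(3) by (intro suminf_pos) (auto dest: sums_summable)
  with diff show ?thesis
    using sums_unique by fastforce
qed

lemma Digamma_diff_sums:
  fixes a b :: "'a :: {real_normed_field, banach}"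
  assumes "a \<noteq> 0" "b \<noteq> 0"
  shows "(\<lambda>k. inverse (b + of_nat k) - inverse (a + of_nat k)) sums (Digamma a - Digamma b)"
proof -
  have "(\<lambda>k. inverse (of_nat (Suc k)) - inverse (z + of_nat k)) sums (Digamma z + euler_mascheroni)"
    if "z \<noteq> 0" for z :: 'a
    using summable_Digamma[OF that] by (simp add: Digamma_def summable_sums)
  from sums_diff[OF this[OF assms(1)] this[OF assms(2)]] show ?thesis
    by simp
qed

definition digamma_tail :: "real \<Rightarrow> real \<Rightarrow> real" where
  "digamma_tail a b = (\<Sum>k. 1 / ((a + Suc k) * (b + Suc k)))"

lemma inverse_squares_sums': "(\<lambda>k. 1 / (real k + 1) ^ 2) sums (pi ^ 2 / 6)"
  using inverse_squares_sums by (simp add: add.commute)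

lemma digamma_tail_term_less_inverse_square:
  fixes a b :: real
  assumes "0 < a" "0 < b"
  shows "1 / ((a + Suc k) * (b + Suc k)) < 1 / (real k + 1) ^ 2"
proof -
  have "(real k + 1) ^ 2 < (a + Suc k) * (b + Suc k)"
    using assms unfolding power2_eq_square by (intro mult_strict_mono) auto
  then show ?thesis
    using assms by (intro divide_strict_left_mono) (auto intro!: mult_pos_pos)
qed

lemma digamma_tail_sums:
  fixes a b :: real
  assumes "0 < a" "0 < b"
  shows "(\<lambda>k. 1 / ((a + Suc k) * (b + Suc k))) sums digamma_tail a b"
proof -
  have "summable (\<lambda>k. 1 / ((a + Suc k) * (b + Suc k)))"
    using assms digamma_tail_term_less_inverse_square
    by (intro summable_comparison_test'[OF sums_summable[OF inverse_squares_sums'], of 0])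
       (auto intro: less_imp_le)
  then show ?thesis
    unfolding digamma_tail_def by (rule summable_sums)
qed

lemma Digamma_diff_eq:
  fixes a b :: real
  assumes "0 < a" "0 < b"
  shows "Digamma a - Digamma b = (a - b) * (1 / (a * b) + digamma_tail a b)"
proof -
  define t where "t k = 1 / ((a + real k) * (b + real k))" for k
  have "inverse (b + real k) - inverse (a + real k) = (a - b) * t k" for k
    using assms by (simp add: t_def field_simps)
  then have "(\<lambda>k. (a - b) * t k) sums (Digamma a - Digamma b)"
    using Digamma_diff_sums[of a b] assms by simp
  moreover have "(\<lambda>k. t (Suc k)) sums digamma_tail a b"
    unfolding t_def using digamma_tail_sums[OF assms] by (simp add: add_ac)
  then have "(\<lambda>k. (a - b) * t k) sums ((a - b) * (digamma_tail a b + t 0))"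
    by (intro sums_mult) (simp add: sums_Suc_iff)
  ultimately show ?thesis
    using sums_unique2 by (fastforce simp: t_def)
qed

lemma digamma_tail_gt:
  fixes a b :: real
  assumes "0 < a" "0 < b" "a < b + 1"
  shows "1 / (b + 1) < digamma_tail a b"
proof (rule sums_strict_less[OF _ digamma_tail_sums[OF assms(1,2)]])
  have "(\<lambda>k. inverse (b + Suc k)) \<longlonglongrightarrow> 0"
    by (intro tendsto_inverse_0_at_top filterlim_tendsto_add_at_top[OF tendsto_const]
          filterlim_compose[OF filterlim_real_sequentially filterlim_Suc])
  from telescope_sums'[OF this]
  show "(\<lambda>k. inverse (b + Suc k) - inverse (b + Suc (Suc k))) sums (1 / (b + 1))"
    by (simp add: divide_inverse add_ac)
next
  fix k
  have "inverse (b + Suc k) - inverse (b + Suc (Suc k)) = 1 / ((b + Suc k) * (b + Suc (Suc k)))"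
    using assms by (simp add: field_simps)
  also have "\<dots> < 1 / ((a + Suc k) * (b + Suc k))"
    using assms by (intro divide_strict_left_mono mult_strict_right_mono mult_pos_pos) auto
  finally show "inverse (b + Suc k) - inverse (b + Suc (Suc k)) < 1 / ((a + Suc k) * (b + Suc k))" .
qed

lemma digamma_tail_less:
  fixes a b :: real
  assumes "0 < a" "0 < b"
  shows "digamma_tail a b < pi ^ 2 / 6"
  using assms digamma_tail_term_less_inverse_square
  by (intro sums_strict_less[OF digamma_tail_sums inverse_squares_sums']) auto

lemma digamma_tail_less_refined:
  fixes a b :: real
  assumes "1/2 < a" "1/2 < b"
  shows "digamma_tail a b < pi ^ 2 / 6 - 5 / 9"
proof -
  define g where "g k = 1 / (real k + 1) ^ 2 - (if k = 0 then 5/9 else 0)" for k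
  have "(\<lambda>k. if k = 0 then 5/9 else 0) sums (5/9 :: real)"
    using sums_single[of 0 "\<lambda>_. 5/9 :: real"] by simp
  then have "g sums (pi ^ 2 / 6 - 5/9)"
    unfolding g_def by (intro sums_diff inverse_squares_sums')
  moreover have "1 / ((a + Suc k) * (b + Suc k)) < g k" for k
  proof (cases "k = 0")
    case True
    have "(3/2) * (3/2) < (a + 1) * (b + 1)"
      using assms by (intro mult_strict_mono) auto
    then have "1 / ((a + 1) * (b + 1)) < 1 / (9/4)"
      by (intro divide_strict_left_mono) auto
    then show ?thesis
      using True by (simp add: g_def)
  next
    case False
    then show ?thesis
      using assms digamma_tail_term_less_inverse_square[of a b k] by (simp add: g_def)
  qed
  ultimately show ?thesis
    using assms by (intro sums_strict_less[OF digamma_tail_sums]) auto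
qed

theorem lemma5p2:
  fixes a b :: real
  assumes "0 < b" and "b < a" and "a \<le> 1"
  shows "(a - b) * (1 / (a * b) + 1 / (b + 1)) < Digamma a - Digamma b \<and>
         Digamma a - Digamma b < (a - b) * (1 / (a * b) + pi ^ 2 / 6) \<and>
         (a > 1/2 \<and> b > 1/2 \<longrightarrow>
           Digamma a - Digamma b < (a - b) * (1 / (a * b) + pi ^ 2 / 6 - 5 / 9))"
proof -
  have "0 < a" "0 < a - b"
    using assms by auto
  have "1 / (b + 1) < digamma_tail a b"
    using assms by (intro digamma_tail_gt) auto
  moreover have "digamma_tail a b < pi ^ 2 / 6"
    using \<open>0 < a\<close> \<open>0 < b\<close> by (rule digamma_tail_less)
  moreover have "digamma_tail a b < pi ^ 2 / 6 - 5 / 9" if "a > 1/2" "b > 1/2"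
    using that by (rule digamma_tail_less_refined)
  ultimately show ?thesis
    unfolding Digamma_diff_eq[OF \<open>0 < a\<close> \<open>0 < b\<close>]
    using \<open>0 < a - b\<close> by (auto intro: mult_strict_left_mono)
qed

end
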